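(* Let $n>k$ be integers with $n$ odd and $k$ even, and let $\mathbf{k^n}$ denote the degree sequence $(k,k,\dots,k)$ of length $n$. Then \[\underline{\mu}(\mathbf{k^n})=\begin{cases}k & \text{if } n<2k-3,\\ k-1 & \text{if } n=2k-3,\\ k/2 & \text{if } n\ge 2k-1.\end{cases}\]
   Context: All graphs are finite and simple. For a graph $G=(V,E)$ on $n$ vertices, a fractional vertex cover is a function $f:V\to[0,\infty)$ with $f(u)+f(v)\ge 1$ for every edge $uv\in E$; $\tau^*(G)$ denotes the minimum of $\sum_{v\in V}f(v)$ over all fractional vertex covers. For $E'\subseteq E$ let $G-E'=(V,E\setminus E')$. Define $\mu(G)=\min\{|E'| : E'\subseteq E,\ \tau^*(G-E')<n/2\}$ (equivalently, the minimum number of edges whose deletion leaves no perfect 2-matching, i.e. no spanning subgraph each of whose components is a $K_2$ or an odd cycle). For a graphical degree sequence $\mathbf d$, $\underline{\mu}(\mathbf d)$ is the minimum of $\mu(G)$ over all simple graphs $G$ realizing $\mathbf d$. *)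

theory Defs
  imports Complex_Main
begin

definition simple_graph :: "'a set \<Rightarrow> 'a set set \<Rightarrow> bool" where
  "simple_graph V E \<longleftrightarrow> finite V \<and> (\<forall>e\<in>E. \<exists>u v. e = {u, v} \<and> u \<noteq> v \<and> u \<in> V \<and> v \<in> V)"

definition degree :: "'a set set \<Rightarrow> 'a \<Rightarrow> nat" where
  "degree E v = card {e \<in> E. v \<in> e}"

definition frac_vertex_cover :: "'a set \<Rightarrow> 'a set set \<Rightarrow> ('a \<Rightarrow> real) \<Rightarrow> bool" where
  "frac_vertex_cover V E f \<longleftrightarrow>
     (\<forall>v\<in>V. f v \<ge> 0) \<and> (\<forall>u v. {u, v} \<in> E \<longrightarrow> f u + f v \<ge> 1)"

definition tau_star :: "'a set \<Rightarrow> 'a set set \<Rightarrow> real" where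
  "tau_star V E = Inf {(\<Sum>v\<in>V. f v) | f. frac_vertex_cover V E f}"

definition mu :: "'a set \<Rightarrow> 'a set set \<Rightarrow> nat" where
  "mu V E = Min {card E' | E'. E' \<subseteq> E \<and> tau_star V (E - E') < real (card V) / 2}"

definition mu_low_const :: "nat \<Rightarrow> nat \<Rightarrow> nat" where
  "mu_low_const n k = Min {mu {0..<n} E | E. simple_graph {0..<n} E \<and> (\<forall>v<n. degree E v = k)}"

end

theory Submission
  imports Defs
begin

text \<open>Rounding a fractional vertex cover of \<open>G - E'\<close> of weight below \<open>n/2\<close> to a
  half-integral one yields disjoint sets \<open>S\<close> and \<open>T\<close> of vertices with \<open>|T| < |S|\<close> such
  that every edge of \<open>G - E'\<close> at \<open>S\<close> ends in \<open>T\<close>. If \<open>G\<close> is \<open>k\<close>-regular, every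
  vertex of \<open>S\<close> keeps at least \<open>k - |T|\<close> of its edges in \<open>E'\<close>, and comparing the
  \<open>k|S|\<close> edge ends at \<open>S\<close> with the \<open>k|T|\<close> edge ends at \<open>T\<close> gives \<open>|E'| \<ge> k/2\<close>. When
  \<open>n\<close> is small compared to \<open>k\<close>, the bound \<open>|S| + |T| \<le> n\<close> keeps \<open>|T|\<close> small, and the
  edges of \<open>E'\<close> at the vertices of \<open>S\<close> then give \<open>|E'| \<ge> k\<close>, or \<open>|E'| \<ge> k - 1\<close> if
  \<open>n = 2k - 3\<close>. The matching upper bounds come from a circulant graph, where it suffices to
  delete the \<open>k\<close> edges at one vertex, and from two graphs in which fewer than \<open>n/2\<close>
  vertices cover all edges except \<open>k - 1\<close>, resp. \<open>k/2\<close>, of them.\<close>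

lemma simple_graph_edgeE:
  assumes "simple_graph V E" "e \<in> E"
  obtains u v where "e = {u, v}" "u \<noteq> v" "u \<in> V" "v \<in> V"
  using assms unfolding simple_graph_def by blast

lemma simple_graph_edge_at:
  assumes "simple_graph V E" "e \<in> E" "u \<in> e"
  obtains w where "e = {u, w}" "w \<noteq> u" "w \<in> V"
proof -
  obtain x y where "e = {x, y}" "x \<noteq> y" "x \<in> V" "y \<in> V"
    using simple_graph_edgeE[OF assms(1,2)] .
  with assms(3) that show ?thesis
    by (auto simp: insert_commute)
qed

lemma simple_graph_edge_subset: "simple_graph V E \<Longrightarrow> e \<in> E \<Longrightarrow> e \<subseteq> V"
  by (metis simple_graph_edgeE empty_subsetI insert_subset)

lemma simple_graph_finite_edges:
  assumes "simple_graph V E"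
  shows "finite E"
proof -
  have "E \<subseteq> Pow V" using simple_graph_edge_subset[OF assms] by blast
  moreover have "finite V" using assms by (simp add: simple_graph_def)
  ultimately show ?thesis by (meson finite_Pow_iff finite_subset)
qed

lemma simple_graph_mono: "simple_graph V E \<Longrightarrow> E' \<subseteq> E \<Longrightarrow> simple_graph V E'"
  unfolding simple_graph_def by blast

lemma sum_degree_eq:
  assumes "finite E" "finite S"
  shows "(\<Sum>v\<in>S. degree E v) = (\<Sum>e\<in>E. card (e \<inter> S))"
proof -
  have "(\<Sum>v\<in>S. degree E v) = (\<Sum>v\<in>S. \<Sum>e\<in>E. if v \<in> e then 1 else 0)"
    using assms by (simp add: degree_def sum.If_cases Int_def)
  also have "\<dots> = (\<Sum>e\<in>E. \<Sum>v\<in>S. if v \<in> e then 1 else 0)"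
    by (rule sum.swap)
  also have "\<dots> = (\<Sum>e\<in>E. card (e \<inter> S))"
    using assms by (simp add: sum.If_cases Int_def conj_commute)
  finally show ?thesis .
qed

lemma sum_degree_le:
  assumes "simple_graph V E" "finite S"
  shows "(\<Sum>v\<in>S. degree E v) \<le> 2 * card E"
proof -
  have "card (e \<inter> S) \<le> 2" if "e \<in> E" for e
    using simple_graph_edgeE[OF assms(1) that]
    by (metis card_2_iff card_mono finite.emptyI finite_insert inf_le1)
  then have "(\<Sum>e\<in>E. card (e \<inter> S)) \<le> (\<Sum>e\<in>E. 2)"
    by (rule sum_mono)
  then show ?thesis
    using sum_degree_eq[OF simple_graph_finite_edges[OF assms(1)] assms(2)] by simp
qed

lemma handshake:
  assumes "simple_graph V E"
  shows "(\<Sum>v\<in>V. degree E v) = 2 * card E"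
proof -
  have "card (e \<inter> V) = 2" if "e \<in> E" for e
    using simple_graph_edgeE[OF assms that] by fastforce
  then show ?thesis
    using sum_degree_eq[OF simple_graph_finite_edges[OF assms]] assms
    by (simp add: simple_graph_def)
qed

lemma degree_add_degree_le:
  assumes "simple_graph V E" "a \<noteq> b"
  shows "degree E a + degree E b \<le> card E + 1"
proof -
  have fin: "finite E" using simple_graph_finite_edges[OF assms(1)] .
  have "{e\<in>E. a \<in> e} \<inter> {e\<in>E. b \<in> e} \<subseteq> {{a, b}}"
    using simple_graph_edgeE[OF assms(1)] assms(2) by blast
  then have "card ({e\<in>E. a \<in> e} \<inter> {e\<in>E. b \<in> e}) \<le> 1"
    using card_mono[of "{{a, b}}"] by simp
  moreover have "card ({e\<in>E. a \<in> e} \<union> {e\<in>E. b \<in> e}) \<le> card E"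
    using fin by (intro card_mono) auto
  moreover have "card ({e\<in>E. a \<in> e} \<union> {e\<in>E. b \<in> e}) + card ({e\<in>E. a \<in> e} \<inter> {e\<in>E. b \<in> e})
      = degree E a + degree E b"
    unfolding degree_def using fin by (intro card_Un_Int[symmetric]) auto
  ultimately show ?thesis by linarith
qed

lemma tau_star_le:
  assumes "frac_vertex_cover V F f"
  shows "tau_star V F \<le> (\<Sum>v\<in>V. f v)"
proof -
  have "bdd_below {(\<Sum>v\<in>V. f v) | f. frac_vertex_cover V F f}"
    by (rule bdd_belowI[of _ 0]) (auto simp: frac_vertex_cover_def intro: sum_nonneg)
  then show ?thesis
    unfolding tau_star_def using assms by (intro cInf_lower) auto
qed

lemma tau_star_lessE:
  assumes "tau_star V F < x"
  obtains f where "frac_vertex_cover V F f" "(\<Sum>v\<in>V. f v) < x"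
proof -
  have "frac_vertex_cover V F (\<lambda>_. 1)"
    by (simp add: frac_vertex_cover_def)
  then have "{(\<Sum>v\<in>V. f v) | f. frac_vertex_cover V F f} \<noteq> {}"
    by blast
  from cInf_lessD[OF this assms[unfolded tau_star_def]] that show ?thesis
    by blast
qed

lemma finite_mu_candidates:
  "finite E \<Longrightarrow> finite {card E' | E'. E' \<subseteq> E \<and> tau_star V (E - E') < real (card V) / 2}"
  by (rule finite_subset[of _ "card ` Pow E"]) auto

lemma mu_le_card:
  assumes "finite E" "E' \<subseteq> E" "frac_vertex_cover V (E - E') f"
    and "(\<Sum>v\<in>V. f v) < real (card V) / 2"
  shows "mu V E \<le> card E'"
proof -
  have "tau_star V (E - E') < real (card V) / 2"
    using tau_star_le[OF assms(3)] assms(4) by linarith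
  then show ?thesis
    unfolding mu_def using assms(1,2) by (intro Min_le finite_mu_candidates) auto
qed

lemma le_mu:
  assumes "finite E" "0 < card V"
    and "\<And>E'. E' \<subseteq> E \<Longrightarrow> tau_star V (E - E') < real (card V) / 2 \<Longrightarrow> b \<le> card E'"
  shows "b \<le> mu V E"
proof -
  have "frac_vertex_cover V (E - E) (\<lambda>_. 0)"
    by (simp add: frac_vertex_cover_def)
  then have "tau_star V (E - E) < real (card V) / 2"
    using tau_star_le assms(2) by fastforce
  then have "{card E' | E'. E' \<subseteq> E \<and> tau_star V (E - E') < real (card V) / 2} \<noteq> {}"
    by blast
  then show ?thesis
    unfolding mu_def using assms(3) by (subst Min_ge_iff[OF finite_mu_candidates[OF assms(1)]]) auto
qed

lemma mu_le_degree:
  assumes "simple_graph V E" "a \<in> V"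
  shows "mu V E \<le> degree E a"
proof -
  have fin: "finite V" using assms(1) by (simp add: simple_graph_def)
  define f where "f v = (if v = a then 0 else 1/2 :: real)" for v
  have "frac_vertex_cover V (E - {e\<in>E. a \<in> e}) f"
    unfolding frac_vertex_cover_def f_def by auto
  moreover have "(\<Sum>v\<in>V. f v) = real (card V - 1) / 2"
    using fin assms(2) by (simp add: f_def sum.remove)
  moreover have "0 < card V"
    using fin assms(2) card_gt_0_iff by blast
  ultimately show ?thesis
    using mu_le_card[OF simple_graph_finite_edges[OF assms(1)], of "{e\<in>E. a \<in> e}" V f]
    by (simp add: degree_def of_nat_diff)
qed

lemma mu_le_card_uncovered:
  assumes "simple_graph V E" "E' \<subseteq> E" "C \<subseteq> V" "2 * card C < card V"
    and "\<And>e. e \<in> E - E' \<Longrightarrow> e \<inter> C \<noteq> {}"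
  shows "mu V E \<le> card E'"
proof -
  define f where "f v = (if v \<in> C then 1 else 0 :: real)" for v
  have "frac_vertex_cover V (E - E') f"
    unfolding frac_vertex_cover_def f_def using assms(5) by fastforce
  moreover have "(\<Sum>v\<in>V. f v) = real (card C)"
    using assms(1,3) by (simp add: f_def sum.If_cases simple_graph_def Int_absorb1)
  ultimately show ?thesis
    using mu_le_card[OF simple_graph_finite_edges[OF assms(1)] assms(2)] assms(4) by fastforce
qed

lemma mu_low_const_eqI:
  assumes "\<exists>E. simple_graph {0..<n} E \<and> (\<forall>v<n. degree E v = k) \<and> mu {0..<n} E \<le> b"
    and "\<And>E. simple_graph {0..<n} E \<Longrightarrow> \<forall>v<n. degree E v = k \<Longrightarrow> b \<le> mu {0..<n} E"
  shows "mu_low_const n k = b"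
proof -
  let ?M = "{mu {0..<n} E | E. simple_graph {0..<n} E \<and> (\<forall>v<n. degree E v = k)}"
  have "?M \<subseteq> mu {0..<n} ` Pow (Pow {0..<n})"
    using simple_graph_edge_subset by blast
  then have "finite ?M"
    by (rule finite_subset) simp
  moreover obtain E where "simple_graph {0..<n} E" "\<forall>v<n. degree E v = k" "mu {0..<n} E \<le> b"
    using assms(1) by blast
  ultimately show ?thesis
    unfolding mu_low_const_def using assms(2)
    by (intro antisym Min.coboundedI[THEN order_trans] Min.boundedI) auto
qed

section \<open>Half-integral covers\<close>

definition half_integral :: "real \<Rightarrow> bool" where
  "half_integral x \<longleftrightarrow> x \<in> {0, 1/2, 1}"

lemma rounding_shift:
  fixes f :: "'a \<Rightarrow> real"
  assumes "finite A" "finite B" "A \<union> B \<noteq> {}"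
    and A: "\<forall>v\<in>A. 0 < f v \<and> f v < 1/2" and B: "\<forall>v\<in>B. 1/2 < f v \<and> f v < 1"
  obtains \<epsilon> where "\<forall>v\<in>A. 0 \<le> f v - \<epsilon> \<and> f v - \<epsilon> \<le> 1/2"
    "\<forall>v\<in>B. 1/2 \<le> f v + \<epsilon> \<and> f v + \<epsilon> \<le> 1"
    "\<epsilon> * (real (card B) - real (card A)) \<le> 0"
    "(\<exists>w\<in>A. half_integral (f w - \<epsilon>)) \<or> (\<exists>w\<in>B. half_integral (f w + \<epsilon>))"
proof (cases "card B \<le> card A")
  case True
  define X where "X = f ` A \<union> (\<lambda>v. 1 - f v) ` B"
  have X: "finite X" "X \<noteq> {}"
    using assms(1-3) by (auto simp: X_def)
  define \<epsilon> where "\<epsilon> = Min X"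
  have "\<epsilon> \<le> f v" if "v \<in> A" for v
    using X that by (auto simp: \<epsilon>_def X_def)
  moreover have "\<epsilon> \<le> 1 - f v" if "v \<in> B" for v
    using X that by (auto simp: \<epsilon>_def X_def)
  moreover have "\<epsilon> \<in> X"
    using X by (simp add: \<epsilon>_def)
  moreover from this have "0 < \<epsilon>"
    using A B by (auto simp: X_def)
  ultimately show ?thesis
    using that[of \<epsilon>] A B True by (force simp: X_def half_integral_def mult_nonneg_nonpos)
next
  case False
  define X where "X = (\<lambda>v. 1/2 - f v) ` A \<union> (\<lambda>v. f v - 1/2) ` B"
  have X: "finite X" "X \<noteq> {}"
    using assms(1-3) by (auto simp: X_def)
  define \<epsilon> where "\<epsilon> = Min X"
  have "\<epsilon> \<le> 1/2 - f v" if "v \<in> A" for v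
    using X that by (auto simp: \<epsilon>_def X_def)
  moreover have "\<epsilon> \<le> f v - 1/2" if "v \<in> B" for v
    using X that by (auto simp: \<epsilon>_def X_def)
  moreover have "\<epsilon> \<in> X"
    using X by (simp add: \<epsilon>_def)
  moreover from this have "0 < \<epsilon>"
    using A B by (auto simp: X_def)
  ultimately show ?thesis
    using that[of "-\<epsilon>"] A B False by (force simp: X_def half_integral_def)
qed

lemma shifted_cover:
  fixes f g :: "'a \<Rightarrow> real"
  assumes F: "\<forall>e\<in>F. e \<subseteq> V" and cover: "\<forall>u v. {u, v} \<in> F \<longrightarrow> 1 \<le> f u + f v"
    and range: "\<forall>v\<in>V. 0 \<le> f v \<and> f v \<le> 1"
    and A: "A = {v\<in>V. 0 < f v \<and> f v < 1/2}" and B: "B = {v\<in>V. 1/2 < f v \<and> f v < 1}"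
    and shift: "\<forall>v\<in>A. 0 \<le> f v - \<epsilon> \<and> f v - \<epsilon> \<le> 1/2" "\<forall>v\<in>B. 1/2 \<le> f v + \<epsilon> \<and> f v + \<epsilon> \<le> 1"
    and g: "g = (\<lambda>v. if v \<in> A then f v - \<epsilon> else if v \<in> B then f v + \<epsilon> else f v)"
  shows "\<forall>v\<in>V. 0 \<le> g v \<and> g v \<le> 1" and "\<forall>u v. {u, v} \<in> F \<longrightarrow> 1 \<le> g u + g v"
proof -
  show g_range: "\<forall>v\<in>V. 0 \<le> g v \<and> g v \<le> 1"
    using range shift by (auto simp: g)
  have high: "1/2 \<le> g v" if "v \<in> V" "1/2 \<le> f v" for v
    using that shift(2) range by (auto simp: g A B)
  have low: "1 \<le> g u + g v" if "{u, v} \<in> F" "f u < 1/2" for u v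
  proof -
    have "u \<in> V" "v \<in> V" "1 \<le> f u + f v"
      using that(1) F cover by auto
    then have "u \<in> A \<and> (v \<in> B \<or> f v = 1) \<or> f u = 0 \<and> f v = 1" "u \<notin> B" "v \<notin> A"
      using that(2) range by (auto simp: A B)
    moreover have "v \<notin> B" if "f v = 1"
      using that by (simp add: B)
    ultimately show ?thesis
      using \<open>1 \<le> f u + f v\<close> \<open>u \<in> V\<close> shift(1) g_range by (auto simp: g)
  qed
  show "\<forall>u v. {u, v} \<in> F \<longrightarrow> 1 \<le> g u + g v"
  proof (intro allI impI)
    fix u v
    assume e: "{u, v} \<in> F"
    then have "u \<in> V" "v \<in> V"
      using F by auto
    consider "f u < 1/2" | "f v < 1/2" | "1/2 \<le> f u" "1/2 \<le> f v"
      by linarith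
    then show "1 \<le> g u + g v"
    proof cases
      case 1
      then show ?thesis
        using low e by blast
    next
      case 2
      then show ?thesis
        using low[of v u] e by (simp add: insert_commute)
    next
      case 3
      then show ?thesis
        using high[OF \<open>u \<in> V\<close>] high[OF \<open>v \<in> V\<close>] by linarith
    qed
  qed
qed

text \<open>A shift as in shifted_cover, in the direction that does not increase the sum and by
  the largest admissible amount, makes at least one more value half-integral.\<close>

lemma rounding_step:
  fixes f :: "'a \<Rightarrow> real"
  assumes "finite V" "\<forall>e\<in>F. e \<subseteq> V"
    and cover: "\<forall>u v. {u, v} \<in> F \<longrightarrow> 1 \<le> f u + f v" and range: "\<forall>v\<in>V. 0 \<le> f v \<and> f v \<le> 1"
    and "\<exists>v\<in>V. \<not> half_integral (f v)"
  obtains g where "\<forall>u v. {u, v} \<in> F \<longrightarrow> 1 \<le> g u + g v" "\<forall>v\<in>V. 0 \<le> g v \<and> g v \<le> 1"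
    "(\<Sum>v\<in>V. g v) \<le> (\<Sum>v\<in>V. f v)"
    "card {v\<in>V. \<not> half_integral (g v)} < card {v\<in>V. \<not> half_integral (f v)}"
proof -
  define A where "A = {v\<in>V. 0 < f v \<and> f v < 1/2}"
  define B where "B = {v\<in>V. 1/2 < f v \<and> f v < 1}"
  have AB: "finite A" "finite B" "A \<subseteq> V" "B \<subseteq> V" "A \<inter> B = {}"
    using assms(1) by (auto simp: A_def B_def)
  have nonhalf: "{v\<in>V. \<not> half_integral (f v)} = A \<union> B"
    using range by (auto simp: A_def B_def half_integral_def)
  then have "A \<union> B \<noteq> {}"
    using assms(5) by blast
  moreover have "\<forall>v\<in>A. 0 < f v \<and> f v < 1/2" "\<forall>v\<in>B. 1/2 < f v \<and> f v < 1"
    by (auto simp: A_def B_def)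
  ultimately obtain \<epsilon>
    where \<epsilon>: "\<forall>v\<in>A. 0 \<le> f v - \<epsilon> \<and> f v - \<epsilon> \<le> 1/2"
      "\<forall>v\<in>B. 1/2 \<le> f v + \<epsilon> \<and> f v + \<epsilon> \<le> 1"
      "\<epsilon> * (real (card B) - real (card A)) \<le> 0"
      "(\<exists>w\<in>A. half_integral (f w - \<epsilon>)) \<or> (\<exists>w\<in>B. half_integral (f w + \<epsilon>))"
    using rounding_shift[OF AB(1,2)] by blast
  define g where "g = (\<lambda>v. if v \<in> A then f v - \<epsilon> else if v \<in> B then f v + \<epsilon> else f v)"
  note g = shifted_cover[OF assms(2) cover range A_def B_def \<epsilon>(1,2) g_def]
  have "g v = f v + \<epsilon> * (of_bool (v \<in> B) - of_bool (v \<in> A))" for v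
    using AB(5) by (auto simp: g_def)
  then have "(\<Sum>v\<in>V. g v)
      = (\<Sum>v\<in>V. f v) + \<epsilon> * ((\<Sum>v\<in>V. of_bool (v \<in> B)) - (\<Sum>v\<in>V. of_bool (v \<in> A)))"
    by (simp add: sum.distrib sum_subtractf sum_distrib_left right_diff_distrib)
  then have "(\<Sum>v\<in>V. g v) \<le> (\<Sum>v\<in>V. f v)"
    using \<epsilon>(3) assms(1) AB(3,4) by (simp add: Int_absorb1 Int_absorb2)
  moreover have "\<exists>w\<in>A \<union> B. half_integral (g w)"
    using \<epsilon>(4) AB(5) by (auto simp: g_def)
  then obtain w where "w \<in> A \<union> B" "half_integral (g w)" ..
  moreover have "v \<in> A \<union> B" if "v \<in> V" "\<not> half_integral (g v)" for v
  proof (rule ccontr)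
    assume "v \<notin> A \<union> B"
    then have "half_integral (f v)"
      using that(1) nonhalf by blast
    with \<open>v \<notin> A \<union> B\<close> that(2) show False
      by (simp add: g_def)
  qed
  ultimately have "{v\<in>V. \<not> half_integral (g v)} \<subseteq> (A \<union> B) - {w}"
    by blast
  then have "card {v\<in>V. \<not> half_integral (g v)} < card {v\<in>V. \<not> half_integral (f v)}"
    unfolding nonhalf using AB(1,2) \<open>w \<in> A \<union> B\<close>
    by (meson card_Diff1_less card_mono finite_Diff finite_UnI le_less_trans)
  with g \<open>(\<Sum>v\<in>V. g v) \<le> (\<Sum>v\<in>V. f v)\<close> show ?thesis
    using that by blast
qed

lemma half_integral_rounding:
  fixes f :: "'a \<Rightarrow> real"
  assumes "finite V" "\<forall>e\<in>F. e \<subseteq> V"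
    and "\<forall>u v. {u, v} \<in> F \<longrightarrow> 1 \<le> f u + f v" "\<forall>v\<in>V. 0 \<le> f v \<and> f v \<le> 1"
  shows "\<exists>g. (\<forall>v\<in>V. half_integral (g v)) \<and> (\<forall>u v. {u, v} \<in> F \<longrightarrow> 1 \<le> g u + g v)
     \<and> (\<Sum>v\<in>V. g v) \<le> (\<Sum>v\<in>V. f v)"
  using assms(3,4)
proof (induction "card {v\<in>V. \<not> half_integral (f v)}" arbitrary: f rule: less_induct)
  case less
  show ?case
  proof (cases "\<forall>v\<in>V. half_integral (f v)")
    case True
    then show ?thesis
      using less.prems(1) by blast
  next
    case False
    then obtain g where g: "\<forall>u v. {u, v} \<in> F \<longrightarrow> 1 \<le> g u + g v" "\<forall>v\<in>V. 0 \<le> g v \<and> g v \<le> 1"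
      "(\<Sum>v\<in>V. g v) \<le> (\<Sum>v\<in>V. f v)"
      "card {v\<in>V. \<not> half_integral (g v)} < card {v\<in>V. \<not> half_integral (f v)}"
      using rounding_step[OF assms(1,2) less.prems] by blast
    from less.hyps[OF g(4,1,2)] g(3) show ?thesis
      by (meson order_trans)
  qed
qed

lemma deficient_set_of_tau_star:
  assumes "finite V" "\<forall>e\<in>F. e \<subseteq> V" "tau_star V F < real (card V) / 2"
  obtains S T where "S \<subseteq> V" "T \<subseteq> V" "S \<inter> T = {}" "card T < card S"
    "\<forall>u v. {u, v} \<in> F \<longrightarrow> u \<in> S \<longrightarrow> v \<in> T"
proof -
  obtain f where f: "frac_vertex_cover V F f" "(\<Sum>v\<in>V. f v) < real (card V) / 2"
    using tau_star_lessE[OF assms(3)] .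
  define f1 where "f1 v = min (f v) 1" for v
  have "\<forall>u v. {u, v} \<in> F \<longrightarrow> 1 \<le> f1 u + f1 v"
  proof (intro allI impI)
    fix u v
    assume "{u, v} \<in> F"
    moreover from this have "u \<in> V" "v \<in> V"
      using assms(2) by auto
    ultimately show "1 \<le> f1 u + f1 v"
      using f(1) by (auto simp: frac_vertex_cover_def f1_def min_def)
  qed
  moreover have "\<forall>v\<in>V. 0 \<le> f1 v \<and> f1 v \<le> 1"
    using f(1) by (simp add: frac_vertex_cover_def f1_def)
  ultimately obtain g where g: "\<forall>v\<in>V. half_integral (g v)"
      "\<forall>u v. {u, v} \<in> F \<longrightarrow> 1 \<le> g u + g v" "(\<Sum>v\<in>V. g v) \<le> (\<Sum>v\<in>V. f1 v)"
    using half_integral_rounding[OF assms(1,2)] by blast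
  have "(\<Sum>v\<in>V. f1 v) \<le> (\<Sum>v\<in>V. f v)"
    by (rule sum_mono) (simp add: f1_def)
  define S where "S = {v\<in>V. g v = 0}"
  define T where "T = {v\<in>V. g v = 1}"
  have "2 * g v = 1 + of_bool (v \<in> T) - of_bool (v \<in> S)" if "v \<in> V" for v
    using g(1) that by (auto simp: half_integral_def S_def T_def)
  then have "2 * (\<Sum>v\<in>V. g v) = real (card V) + real (card T) - real (card S)"
    using assms(1) by (simp add: sum_distrib_left sum.distrib sum_subtractf S_def T_def Int_def)
  then have "card T < card S"
    using f(2) g(3) \<open>(\<Sum>v\<in>V. f1 v) \<le> _\<close> by linarith
  moreover have "v \<in> T" if "{u, v} \<in> F" "u \<in> S" for u v
    using that g(1,2) assms(2) by (force simp: S_def T_def half_integral_def)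
  moreover have "S \<subseteq> V" "T \<subseteq> V" "S \<inter> T = {}"
    by (auto simp: S_def T_def)
  ultimately show ?thesis
    using that by blast
qed

section \<open>Lower bounds for regular graphs\<close>

lemma regular_deficient_degree:
  assumes sg: "simple_graph V E" and reg: "\<forall>v\<in>V. degree E v = k" and "E' \<subseteq> E"
    and nbr: "\<forall>u w. {u, w} \<in> E - E' \<longrightarrow> u \<in> S \<longrightarrow> w \<in> T"
    and "finite T" "S \<subseteq> V" "v \<in> S"
  shows "k \<le> degree E' v + card T"
proof -
  have "{e\<in>E. v \<in> e} \<subseteq> {e\<in>E'. v \<in> e} \<union> (\<lambda>w. {v, w}) ` T"
  proof
    fix e
    assume e: "e \<in> {e\<in>E. v \<in> e}"
    then obtain w where "e = {v, w}"
      using simple_graph_edge_at[OF sg] by blast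
    with e nbr \<open>v \<in> S\<close> show "e \<in> {e\<in>E'. v \<in> e} \<union> (\<lambda>w. {v, w}) ` T"
      by blast
  qed
  then have "degree E v \<le> card ({e\<in>E'. v \<in> e} \<union> (\<lambda>w. {v, w}) ` T)"
    unfolding degree_def
    using simple_graph_finite_edges[OF sg] \<open>E' \<subseteq> E\<close> \<open>finite T\<close>
    by (intro card_mono) (auto intro: finite_subset)
  also have "\<dots> \<le> degree E' v + card T"
    unfolding degree_def using card_Un_le card_image_le[OF \<open>finite T\<close>] le_trans add_left_mono by blast
  finally show ?thesis
    using reg assms(6,7) by auto
qed

text \<open>Every edge of \<open>E - E'\<close> that meets \<open>S\<close> meets it once and also meets \<open>T\<close>.\<close>

lemma regular_deficient_card:
  assumes sg: "simple_graph V E" and reg: "\<forall>v\<in>V. degree E v = k" and "E' \<subseteq> E"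
    and nbr: "\<forall>u w. {u, w} \<in> E - E' \<longrightarrow> u \<in> S \<longrightarrow> w \<in> T"
    and "S \<subseteq> V" "T \<subseteq> V" "S \<inter> T = {}"
  shows "k * card S \<le> 2 * card E' + k * card T"
proof -
  have fin: "finite E" "finite S" "finite T"
    using simple_graph_finite_edges[OF sg] sg assms(5,6) by (auto simp: simple_graph_def intro: finite_subset)
  have "card (e \<inter> S) \<le> card (e \<inter> T)" if e: "e \<in> E - E'" for e
  proof (cases "e \<inter> S = {}")
    case False
    then obtain u where "u \<in> e" "u \<in> S"
      by blast
    moreover obtain w where "e = {u, w}"
      using simple_graph_edge_at[OF sg _ \<open>u \<in> e\<close>] e by blast
    ultimately have "w \<in> T" "w \<notin> S" "e \<inter> S = {u}"
      using nbr e assms(7) by auto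
    then show ?thesis
      using card_mono[of "e \<inter> T" "{w}"] fin(3) \<open>e = {u, w}\<close> by auto
  qed simp
  then have "(\<Sum>e\<in>E - E'. card (e \<inter> S)) \<le> (\<Sum>e\<in>E - E'. card (e \<inter> T))"
    by (rule sum_mono)
  also have "\<dots> \<le> (\<Sum>e\<in>E. card (e \<inter> T))"
    using fin(1) by (intro sum_mono2) auto
  finally have cross: "(\<Sum>e\<in>E - E'. card (e \<inter> S)) \<le> (\<Sum>e\<in>E. card (e \<inter> T))" .
  have inner: "(\<Sum>e\<in>E'. card (e \<inter> S)) \<le> 2 * card E'"
    using sum_degree_le[OF simple_graph_mono[OF sg \<open>E' \<subseteq> E\<close>] fin(2)]
      sum_degree_eq[OF finite_subset[OF \<open>E' \<subseteq> E\<close> fin(1)] fin(2)] by simp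
  have "k * card S = (\<Sum>v\<in>S. degree E v)"
    using reg assms(5) by (simp add: subset_iff)
  also have "\<dots> = (\<Sum>e\<in>E'. card (e \<inter> S)) + (\<Sum>e\<in>E - E'. card (e \<inter> S))"
    using sum_degree_eq[OF fin(1,2)] sum.subset_diff[OF \<open>E' \<subseteq> E\<close> fin(1)] by (simp add: add.commute)
  also have "\<dots> \<le> 2 * card E' + (\<Sum>e\<in>E. card (e \<inter> T))"
    using inner cross by (rule add_mono)
  also have "(\<Sum>e\<in>E. card (e \<inter> T)) = k * card T"
    using sum_degree_eq[OF fin(1,3)] reg assms(6) by (simp add: subset_iff mult.commute)
  finally show ?thesis .
qed

lemma regular_deficient_edges:
  assumes sg: "simple_graph V E" and reg: "\<forall>v\<in>V. degree E v = k" and "E' \<subseteq> E"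
    and nbr: "\<forall>u w. {u, w} \<in> E - E' \<longrightarrow> u \<in> S \<longrightarrow> w \<in> T"
    and ST: "S \<subseteq> V" "T \<subseteq> V" "card T < card S"
  shows "(card T + 1) * (k - card T) \<le> 2 * card E'"
    and "k - card T \<le> card E'"
    and "card T = 1 \<Longrightarrow> 2 * (k - 1) \<le> card E' + 1"
proof -
  have fin: "finite S" "finite T"
    using ST(1,2) sg finite_subset by (auto simp: simple_graph_def)
  have sg': "simple_graph V E'"
    using simple_graph_mono[OF sg \<open>E' \<subseteq> E\<close>] .
  have deg: "k - card T \<le> degree E' v" if "v \<in> S" for v
    using regular_deficient_degree[OF sg reg \<open>E' \<subseteq> E\<close> nbr fin(2) ST(1) that] by linarith
  have "(card T + 1) * (k - card T) \<le> card S * (k - card T)"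
    using ST(3) by (intro mult_le_mono1) simp
  also have "\<dots> \<le> (\<Sum>v\<in>S. degree E' v)"
    using sum_mono[OF deg] by simp
  also have "\<dots> \<le> 2 * card E'"
    using sum_degree_le[OF sg' fin(1)] .
  finally show "(card T + 1) * (k - card T) \<le> 2 * card E'" .
  obtain a where "a \<in> S"
    using ST(3) by (metis card.empty ex_in_conv not_less0)
  moreover have "degree E' a \<le> card E'"
    unfolding degree_def using simple_graph_finite_edges[OF sg'] by (intro card_mono) auto
  ultimately show "k - card T \<le> card E'"
    using deg le_trans by blast
  show "2 * (k - 1) \<le> card E' + 1" if "card T = 1"
  proof -
    have "\<exists>a\<in>S. \<exists>b\<in>S. a \<noteq> b"
      using ST(3) that fin(1) card_le_Suc0_iff_eq[of S] by auto
    then obtain a b where "a \<in> S" "b \<in> S" "a \<noteq> b"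
      by blast
    then show ?thesis
      using deg[of a] deg[of b] degree_add_degree_le[OF sg', of a b] that by linarith
  qed
qed

text \<open>Here \<open>t\<close> is the size of the set \<open>T\<close> of deficient_set_of_tau_star for \<open>G - E'\<close>.\<close>

lemma regular_deletion_deficiency:
  assumes sg: "simple_graph V E" and reg: "\<forall>v\<in>V. degree E v = k"
    and "E' \<subseteq> E" and tau: "tau_star V (E - E') < real (card V) / 2"
  obtains t where "2 * t < card V" "k \<le> 2 * card E'" "(t + 1) * (k - t) \<le> 2 * card E'"
    "k - t \<le> card E'" "t = 1 \<Longrightarrow> 2 * (k - 1) \<le> card E' + 1"
proof -
  have finV: "finite V"
    using sg by (simp add: simple_graph_def)
  obtain S T where ST: "S \<subseteq> V" "T \<subseteq> V" "S \<inter> T = {}" "card T < card S"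
    and nbr: "\<forall>u w. {u, w} \<in> E - E' \<longrightarrow> u \<in> S \<longrightarrow> w \<in> T"
    using deficient_set_of_tau_star[OF finV _ tau] simple_graph_edge_subset[OF sg] by blast
  have "card S + card T \<le> card V"
    using ST finV by (metis card_Un_disjoint card_mono finite_subset le_sup_iff)
  then have "2 * card T < card V"
    using ST(4) by linarith
  moreover have "k \<le> 2 * card E'"
  proof -
    have "k * card S \<le> 2 * card E' + k * card T"
      using regular_deficient_card[OF sg reg \<open>E' \<subseteq> E\<close> nbr ST(1-3)] .
    moreover have "k * (card T + 1) \<le> k * card S"
      using ST(4) by (intro mult_le_mono2) simp
    ultimately show ?thesis
      by simp
  qed
  ultimately show ?thesis
    using that regular_deficient_edges[OF sg reg \<open>E' \<subseteq> E\<close> nbr ST(1,2,4)] by blast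
qed

lemma regular_deletion_lower_bounds:
  assumes sg: "simple_graph V E" and reg: "\<forall>v\<in>V. degree E v = k" and "k < card V"
    and "E' \<subseteq> E" and tau: "tau_star V (E - E') < real (card V) / 2"
  shows "k \<le> 2 * card E'"
    and "card V + 5 \<le> 2 * k \<Longrightarrow> k \<le> card E'"
    and "card V + 3 = 2 * k \<Longrightarrow> k - 1 \<le> card E'"
proof -
  obtain t where t: "2 * t < card V" "k \<le> 2 * card E'" "(t + 1) * (k - t) \<le> 2 * card E'"
    "k - t \<le> card E'" "t = 1 \<Longrightarrow> 2 * (k - 1) \<le> card E' + 1"
    using regular_deletion_deficiency[OF sg reg \<open>E' \<subseteq> E\<close> tau] by blast
  show "k \<le> 2 * card E'"
    by (fact t(2))
  show "k \<le> card E'" if "card V + 5 \<le> 2 * k"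
  proof -
    have "6 \<le> k" "t + 3 \<le> k"
      using that \<open>k < card V\<close> t(1) by linarith+
    consider "t = 0" | "t = 1" | "2 \<le> t"
      by linarith
    then show ?thesis
    proof cases
      case 3
      then obtain r where "k = t + 3 + r"
        using \<open>t + 3 \<le> k\<close> le_Suc_ex by blast
      moreover have "2 * r \<le> t * r"
        using 3 by simp
      ultimately have "2 * k \<le> (t + 1) * (k - t)"
        using \<open>6 \<le> k\<close> by (cases r) (simp_all add: algebra_simps)
      then show ?thesis
        using t(3) by linarith
    qed (use t(4,5) \<open>6 \<le> k\<close> in auto)
  qed
  show "k - 1 \<le> card E'" if "card V + 3 = 2 * k"
  proof (cases "t = 0")
    case False
    have "t + 2 \<le> k"
      using that t(1) by linarith
    then obtain r where "k = t + 2 + r"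
      using le_Suc_ex by blast
    moreover have "r \<le> t * r"
      using False by simp
    ultimately have "2 * (k - 1) \<le> (t + 1) * (k - t)"
      by (simp add: algebra_simps)
    then show ?thesis
      using t(3) by linarith
  qed (use t(4) in simp)
qed

lemma regular_mu_lower_bounds:
  assumes sg: "simple_graph V E" and reg: "\<forall>v\<in>V. degree E v = k" and "k < card V"
  shows "k \<le> 2 * mu V E"
    and "card V + 5 \<le> 2 * k \<Longrightarrow> k \<le> mu V E"
    and "card V + 3 = 2 * k \<Longrightarrow> k - 1 \<le> mu V E"
proof -
  note bounds = regular_deletion_lower_bounds[OF sg reg \<open>k < card V\<close>]
  note le_mu = le_mu[OF simple_graph_finite_edges[OF sg]]
  have pos: "0 < card V"
    using \<open>k < card V\<close> by simp
  have "(k + 1) div 2 \<le> mu V E"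
    by (rule le_mu[OF pos]) (drule (1) bounds(1), linarith)
  then show "k \<le> 2 * mu V E"
    by linarith
  show "k \<le> mu V E" if "card V + 5 \<le> 2 * k"
    by (rule le_mu[OF pos]) (rule bounds(2)[OF _ _ that])
  show "k - 1 \<le> mu V E" if "card V + 3 = 2 * k"
    by (rule le_mu[OF pos]) (rule bounds(3)[OF _ _ that])
qed

definition graph_of :: "nat \<Rightarrow> (nat \<Rightarrow> nat \<Rightarrow> bool) \<Rightarrow> nat set set" where
  "graph_of n adj = {{u, v} | u v. u < n \<and> v < n \<and> adj u v}"

lemma simple_graph_graph_of:
  "(\<And>u. u < n \<Longrightarrow> \<not> adj u u) \<Longrightarrow> simple_graph {0..<n} (graph_of n adj)"
  unfolding simple_graph_def graph_of_def by fastforce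

lemma degree_graph_of:
  assumes sym: "\<And>u v. u < n \<Longrightarrow> v < n \<Longrightarrow> adj u v \<Longrightarrow> adj v u"
    and irrefl: "\<not> adj u u" and "u < n"
  shows "degree (graph_of n adj) u = card {v. v < n \<and> adj u v}"
proof -
  have "{e \<in> graph_of n adj. u \<in> e} = (\<lambda>v. {u, v}) ` {v. v < n \<and> adj u v}"
    using \<open>u < n\<close> sym unfolding graph_of_def by (auto simp: insert_commute)
  moreover have "inj_on (\<lambda>v. {u, v}) {v. v < n \<and> adj u v}"
    by (rule inj_onI) (auto simp: doubleton_eq_iff)
  ultimately show ?thesis
    unfolding degree_def by (simp add: card_image)
qed

lemma card_graph_of:
  assumes sym: "\<And>u v. u < n \<Longrightarrow> v < n \<Longrightarrow> adj u v \<Longrightarrow> adj v u"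
    and irrefl: "\<And>u. u < n \<Longrightarrow> \<not> adj u u"
  shows "2 * card (graph_of n adj) = (\<Sum>u<n. card {v. v < n \<and> adj u v})"
proof -
  have "simple_graph {0..<n} (graph_of n adj)"
    using irrefl by (rule simple_graph_graph_of)
  then have "2 * card (graph_of n adj) = (\<Sum>u<n. degree (graph_of n adj) u)"
    by (simp add: handshake flip: atLeast0LessThan)
  also have "\<dots> = (\<Sum>u<n. card {v. v < n \<and> adj u v})"
  proof (rule sum.cong)
    fix u
    assume "u \<in> {..<n}"
    then have "u < n"
      by simp
    then show "degree (graph_of n adj) u = card {v. v < n \<and> adj u v}"
      using degree_graph_of[of n adj u] sym irrefl by blast
  qed simp
  finally show ?thesis .
qed

lemma card_less_add_split:
  fixes m l :: nat
  shows "card {v. v < m + l \<and> P v} = card {v. v < m \<and> P v} + card {j. j < l \<and> P (m + j)}"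
proof -
  have "{v. v < m + l \<and> P v} = {v. v < m \<and> P v} \<union> (+) m ` {j. j < l \<and> P (m + j)}"
  proof (intro equalityI subsetI)
    fix v
    assume v: "v \<in> {v. v < m + l \<and> P v}"
    show "v \<in> {v. v < m \<and> P v} \<union> (+) m ` {j. j < l \<and> P (m + j)}"
    proof (cases "v < m")
      case False
      with v show ?thesis
        by (intro UnI2 image_eqI[of _ _ "v - m"]) auto
    qed (use v in simp)
  qed auto
  moreover have "card ((+) m ` {j. j < l \<and> P (m + j)}) = card {j. j < l \<and> P (m + j)}"
    by (simp add: card_image)
  ultimately show ?thesis
    using card_Un_disjoint[of "{v. v < m \<and> P v}" "(+) m ` {j. j < l \<and> P (m + j)}"] by auto
qed

lemma sum_less_add_split:
  fixes m l :: nat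
  shows "(\<Sum>v<m + l. f v) = (\<Sum>v<m. f v) + (\<Sum>j<l. f (m + j))"
  by (induction l) (simp_all add: add.assoc)

definition matching :: "nat \<Rightarrow> nat \<Rightarrow> nat \<Rightarrow> bool" where
  "matching k u v \<longleftrightarrow> u < k \<and> v < k \<and> (v = Suc u \<and> even u \<or> u = Suc v \<and> even v)"

lemma card_matching_neighbours:
  assumes "even k" "k \<le> n"
  shows "card {v. v < n \<and> matching k u v} = (if u < k then 1 else 0)"
proof -
  have "Suc u < k" if "even u" "u < k"
    using that assms(1) by (metis Suc_lessI even_Suc)
  then have "{v. v < n \<and> matching k u v} = (if u < k then {if even u then Suc u else u - 1} else {})"
    using assms(2) by (auto simp: matching_def)
  then show ?thesis
    by simp
qed

lemma card_graph_of_matching: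
  assumes "even k" "k \<le> n"
  shows "card (graph_of n (matching k)) = k div 2"
proof -
  have "2 * card (graph_of n (matching k)) = (\<Sum>u<n. card {v. v < n \<and> matching k u v})"
    by (rule card_graph_of) (auto simp: matching_def)
  also have "\<dots> = (\<Sum>u<n. if u < k then 1 else 0)"
    using card_matching_neighbours[OF assms] by simp
  also have "\<dots> = k"
  proof -
    have "{..<n} \<inter> {u. u < k} = {..<k}"
      using assms(2) by auto
    then show ?thesis
      by (simp add: sum.If_cases)
  qed
  finally show ?thesis
    by simp
qed

lemma card_add_mod_in:
  fixes n c :: nat
  assumes "D \<subseteq> {..<n}"
  shows "card {v. v < n \<and> (v + c) mod n \<in> D} = card D"
proof (cases "n = 0")
  case False
  define \<phi> where "\<phi> v = (v + c) mod n" for v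
  have inj: "inj_on \<phi> {..<n}"
  proof -
    have "x = y" if "x \<le> y" "y < n" "\<phi> x = \<phi> y" for x y
    proof -
      have "n dvd (y + c) - (x + c)"
        using that mod_eq_dvd_iff_nat[of "x + c" "y + c" n] by (simp add: \<phi>_def)
      moreover have "y - x < n"
        using that(2) by linarith
      ultimately have "\<not> 0 < y - x"
        using nat_dvd_not_less[of "y - x" n] by auto
      then show ?thesis
        using that(1) by simp
    qed
    then show ?thesis
      by (metis inj_onI lessThan_iff nat_le_linear)
  qed
  have "\<phi> ` {..<n} \<subseteq> {..<n}"
    using False by (auto simp: \<phi>_def)
  then have "\<phi> ` {..<n} = {..<n}"
    using endo_inj_surj[OF _ _ inj] by simp
  have "\<phi> ` {v. v < n \<and> \<phi> v \<in> D} = D"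
  proof
    show "D \<subseteq> \<phi> ` {v. v < n \<and> \<phi> v \<in> D}"
    proof
      fix d
      assume "d \<in> D"
      then obtain v where "v < n" "d = \<phi> v"
        using assms \<open>\<phi> ` {..<n} = {..<n}\<close> by (metis lessThan_iff imageE subsetD)
      with \<open>d \<in> D\<close> show "d \<in> \<phi> ` {v. v < n \<and> \<phi> v \<in> D}"
        by blast
    qed
  qed auto
  moreover have "inj_on \<phi> {v. v < n \<and> \<phi> v \<in> D}"
    using inj by (rule inj_on_subset) auto
  ultimately show ?thesis
    using card_image unfolding \<phi>_def by fastforce
qed (use assms in simp)

lemma mod_add_diff_swap:
  fixes u v n :: nat
  assumes "u < n" "v < n"
  shows "(u + (n - v)) mod n = (n - (v + (n - u)) mod n) mod n"
proof -
  have offset: "int ((x + (n - y)) mod n) = (int x - int y) mod int n" if "y \<le> n" for x y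
  proof -
    have "int ((x + (n - y)) mod n) = (int x - int y + int n) mod int n"
      using that by (simp add: zmod_int of_nat_diff algebra_simps)
    then show ?thesis
      by simp
  qed
  have "(v + (n - u)) mod n \<le> n"
    using assms by simp
  then have "int ((n - (v + (n - u)) mod n) mod n) = (int n - int ((v + (n - u)) mod n)) mod int n"
    by (simp add: zmod_int of_nat_diff)
  also have "\<dots> = (int u - int v) mod int n"
    using offset[of u v] assms by (simp add: mod_minus_eq)
  also have "\<dots> = int ((u + (n - v)) mod n)"
    using offset[of v u] assms by simp
  finally show ?thesis
    by linarith
qed

definition cayley :: "nat \<Rightarrow> nat set \<Rightarrow> nat \<Rightarrow> nat \<Rightarrow> bool" where
  "cayley n D u v \<longleftrightarrow> (v + (n - u)) mod n \<in> D"

lemma cayley_sym: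
  assumes D: "D \<subseteq> {1..<n}" "\<And>d. d \<in> D \<Longrightarrow> n - d \<in> D"
    and "u < n" "v < n" "cayley n D u v"
  shows "cayley n D v u"
proof -
  define d where "d = (v + (n - u)) mod n"
  have "d \<in> D"
    using assms(5) by (simp add: cayley_def d_def)
  then have "0 < d" "d < n"
    using D(1) by auto
  then have "(n - d) mod n = n - d"
    by simp
  then show ?thesis
    using mod_add_diff_swap[OF assms(3,4)] D(2)[OF \<open>d \<in> D\<close>] by (simp add: cayley_def d_def)
qed

lemma card_cayley_neighbours:
  "D \<subseteq> {..<n} \<Longrightarrow> card {v. v < n \<and> cayley n D u v} = card D"
  unfolding cayley_def by (rule card_add_mod_in)

lemma cayley_graph:
  assumes D: "D \<subseteq> {1..<n}" "\<And>d. d \<in> D \<Longrightarrow> n - d \<in> D"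
  shows "simple_graph {0..<n} (graph_of n (cayley n D))"
    and "\<forall>v<n. degree (graph_of n (cayley n D)) v = card D"
proof -
  have irrefl: "\<not> cayley n D u u" if "u < n" for u
    using that D(1) by (auto simp: cayley_def)
  then show "simple_graph {0..<n} (graph_of n (cayley n D))"
    by (rule simple_graph_graph_of)
  show "\<forall>v<n. degree (graph_of n (cayley n D)) v = card D"
  proof (intro allI impI)
    fix v
    assume "v < n"
    have "degree (graph_of n (cayley n D)) v = card {w. w < n \<and> cayley n D v w}"
      using degree_graph_of[of n "cayley n D" v] cayley_sym[OF D] irrefl \<open>v < n\<close> by blast
    also have "\<dots> = card D"
      using D(1) by (intro card_cayley_neighbours) auto
    finally show "degree (graph_of n (cayley n D)) v = card D" .
  qed
qed

definition circulant_offsets :: "nat \<Rightarrow> nat \<Rightarrow> nat set" where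
  "circulant_offsets n h = {1..h} \<union> {n - h..<n}"

lemma circulant_offsets:
  assumes "2 * h < n"
  shows "circulant_offsets n h \<subseteq> {1..<n}"
    and "\<And>d. d \<in> circulant_offsets n h \<Longrightarrow> n - d \<in> circulant_offsets n h"
    and "card (circulant_offsets n h) = 2 * h"
proof -
  show "circulant_offsets n h \<subseteq> {1..<n}" "\<And>d. d \<in> circulant_offsets n h \<Longrightarrow> n - d \<in> circulant_offsets n h"
    using assms by (auto simp: circulant_offsets_def)
  have "{1..h} \<inter> {n - h..<n} = {}"
    using assms by auto
  then show "card (circulant_offsets n h) = 2 * h"
    using assms unfolding circulant_offsets_def by (simp add: card_Un_disjoint)
qed

section \<open>The extremal graphs\<close>

lemma ex_regular_graph_mu_le:
  assumes "even k" "k < n"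
  shows "\<exists>E. simple_graph {0..<n} E \<and> (\<forall>v<n. degree E v = k) \<and> mu {0..<n} E \<le> k"
proof -
  have "2 * (k div 2) < n"
    using assms by simp
  note offsets = circulant_offsets[OF this]
  note circulant = cayley_graph[OF offsets(1,2)]
  show ?thesis
    using circulant offsets(3) mu_le_degree[OF circulant(1), of 0] assms by auto
qed

definition shifted_cycle :: "nat \<Rightarrow> nat \<Rightarrow> nat \<Rightarrow> nat \<Rightarrow> bool" where
  "shifted_cycle q p u v \<longleftrightarrow> q \<le> u \<and> q \<le> v \<and> cayley p (circulant_offsets p 1) (u - q) (v - q)"

lemma shifted_cycle:
  assumes "2 < p"
  shows "\<And>u v. u < q + p \<Longrightarrow> v < q + p \<Longrightarrow> shifted_cycle q p u v \<Longrightarrow> shifted_cycle q p v u"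
    and "\<And>u. u < q + p \<Longrightarrow> \<not> shifted_cycle q p u u"
    and "\<And>u. card {j. j < p \<and> shifted_cycle q p u (q + j)} = (if u < q then 0 else 2)"
proof -
  note offsets = circulant_offsets[of 1 p]
  show "shifted_cycle q p v u" if "u < q + p" "v < q + p" "shifted_cycle q p u v" for u v
    using that cayley_sym[OF offsets(1,2), of "u - q" "v - q"] assms by (auto simp: shifted_cycle_def)
  show "\<not> shifted_cycle q p u u" if "u < q + p" for u
    using that assms by (auto simp: shifted_cycle_def cayley_def circulant_offsets_def)
  show "card {j. j < p \<and> shifted_cycle q p u (q + j)} = (if u < q then 0 else 2)" for u
    using card_cayley_neighbours[of "circulant_offsets p 1" p "u - q"] offsets(1,3) assms
    by (fastforce simp: shifted_cycle_def)
qed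

lemma card_graph_of_shifted_cycle:
  assumes "2 < p"
  shows "card (graph_of (q + p) (shifted_cycle q p)) = p"
proof -
  note cycle = shifted_cycle[OF assms]
  have "2 * card (graph_of (q + p) (shifted_cycle q p))
      = (\<Sum>u<q + p. card {v. v < q + p \<and> shifted_cycle q p u v})"
    using cycle(1,2) by (rule card_graph_of)
  also have "\<dots> = (\<Sum>u<q + p. if u < q then 0 else 2)"
  proof (rule sum.cong)
    fix u
    have "{v. v < q \<and> shifted_cycle q p u v} = {}"
      by (auto simp: shifted_cycle_def)
    then show "card {v. v < q + p \<and> shifted_cycle q p u v} = (if u < q then 0 else 2)"
      using card_less_add_split[of q p "shifted_cycle q p u"] cycle(3)[of q u]
      by (simp only: card.empty add_0)
  qed simp
  also have "\<dots> = 2 * p"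
    by (simp add: sum_less_add_split)
  finally show ?thesis
    by simp
qed

definition matching_join_cycle :: "nat \<Rightarrow> nat \<Rightarrow> nat \<Rightarrow> nat \<Rightarrow> bool" where
  "matching_join_cycle q p u v \<longleftrightarrow> matching q u v \<or> (u < q) \<noteq> (v < q) \<or> shifted_cycle q p u v"

lemma matching_join_cycle_regular:
  assumes "even q" "p = q + 1" "2 < p"
  defines "G \<equiv> graph_of (q + p) (matching_join_cycle q p)"
  shows "simple_graph {0..<q + p} G" and "\<forall>v<q + p. degree G v = q + 2"
proof -
  note cycle = shifted_cycle[OF \<open>2 < p\<close>]
  have sym: "matching_join_cycle q p v u"
    if "u < q + p" "v < q + p" "matching_join_cycle q p u v" for u v
    using that cycle(1)[OF that(1,2)] by (auto simp: matching_join_cycle_def matching_def)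
  have irrefl: "\<not> matching_join_cycle q p u u" if "u < q + p" for u
    using that cycle(2) by (auto simp: matching_join_cycle_def matching_def)
  then show "simple_graph {0..<q + p} G"
    unfolding G_def by (rule simple_graph_graph_of)
  show "\<forall>v<q + p. degree G v = q + 2"
  proof (intro allI impI)
    fix u
    assume "u < q + p"
    have "degree G u = card {w. w < q + p \<and> matching_join_cycle q p u w}"
      unfolding G_def using degree_graph_of[of "q + p" "matching_join_cycle q p" u] sym irrefl \<open>u < q + p\<close>
      by blast
    also have "\<dots> = card {w. w < q \<and> matching_join_cycle q p u w}
        + card {j. j < p \<and> matching_join_cycle q p u (q + j)}"
      by (rule card_less_add_split)
    also have "\<dots> = q + 2"
    proof (cases "u < q")
      case True
      have "{w. w < q \<and> matching_join_cycle q p u w} = {w. w < q \<and> matching q u w}"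
        using True by (auto simp: matching_join_cycle_def shifted_cycle_def)
      moreover have "{j. j < p \<and> matching_join_cycle q p u (q + j)} = {..<p}"
        using True by (auto simp: matching_join_cycle_def)
      ultimately show ?thesis
        using card_matching_neighbours[OF \<open>even q\<close>, of q u] True \<open>p = q + 1\<close> by simp
    next
      case False
      have "{w. w < q \<and> matching_join_cycle q p u w} = {..<q}"
        using False by (auto simp: matching_join_cycle_def)
      moreover have "{j. j < p \<and> matching_join_cycle q p u (q + j)} = {j. j < p \<and> shifted_cycle q p u (q + j)}"
        using False by (auto simp: matching_join_cycle_def matching_def)
      ultimately show ?thesis
        using cycle(3)[of q u] False by simp
    qed
    finally show "degree G u = q + 2" .
  qed
qed

lemma mu_matching_join_cycle_le:
  assumes "even q" "p = q + 1" "2 < p"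
  shows "mu {0..<q + p} (graph_of (q + p) (matching_join_cycle q p)) \<le> p"
proof -
  have "mu {0..<q + p} (graph_of (q + p) (matching_join_cycle q p))
      \<le> card (graph_of (q + p) (shifted_cycle q p))"
  proof (rule mu_le_card_uncovered[OF matching_join_cycle_regular(1)[OF assms]])
    show "graph_of (q + p) (shifted_cycle q p) \<subseteq> graph_of (q + p) (matching_join_cycle q p)"
      unfolding graph_of_def matching_join_cycle_def by blast
    show "e \<inter> {0..<q} \<noteq> {}"
      if "e \<in> graph_of (q + p) (matching_join_cycle q p) - graph_of (q + p) (shifted_cycle q p)" for e
      using that unfolding graph_of_def matching_join_cycle_def matching_def by auto
  qed (use \<open>p = q + 1\<close> in auto)
  then show ?thesis
    using card_graph_of_shifted_cycle[OF \<open>2 < p\<close>] by simp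
qed

lemma ex_regular_graph_mu_le_pred:
  assumes "even k" "4 \<le> k" "n + 3 = 2 * k"
  shows "\<exists>E. simple_graph {0..<n} E \<and> (\<forall>v<n. degree E v = k) \<and> mu {0..<n} E \<le> k - 1"
proof -
  have "even (k - 2)" "k - 1 = (k - 2) + 1" "2 < k - 1" "n = (k - 2) + (k - 1)"
    using assms by auto
  note params = this(1-3)
  show ?thesis
    using matching_join_cycle_regular[OF params] mu_matching_join_cycle_le[OF params]
      \<open>n = (k - 2) + (k - 1)\<close> \<open>4 \<le> k\<close> by auto
qed

definition window_cross :: "nat \<Rightarrow> nat \<Rightarrow> nat \<Rightarrow> nat \<Rightarrow> bool" where
  "window_cross m k u v \<longleftrightarrow> u < m \<and> m \<le> v \<and> (u + (v - m) + 1) mod m < k"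

text \<open>Adding a vertex \<open>m + t\<close> to the second side would make the cross edges a
  \<open>k\<close>-regular bipartite graph, with that vertex adjacent exactly to \<open>0..<k\<close>; the matching
  on \<open>0..<k\<close> makes up for its absence.\<close>

definition window_graph :: "nat \<Rightarrow> nat \<Rightarrow> nat \<Rightarrow> nat \<Rightarrow> bool" where
  "window_graph m k u v \<longleftrightarrow> matching k u v \<or> window_cross m k u v \<or> window_cross m k v u"

lemma card_window_drop_last:
  assumes "m = t + 1" "u < m" "k \<le> m"
  shows "card {j. j < t \<and> (j + (u + 1)) mod m \<in> {..<k}} + (if u < k then 1 else 0) = k"
proof -
  have "k = card {j. j < t + 1 \<and> (j + (u + 1)) mod m \<in> {..<k}}"
    using card_add_mod_in[of "{..<k}" m "u + 1"] assms by simp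
  also have "\<dots> = card {j. j < t \<and> (j + (u + 1)) mod m \<in> {..<k}}
      + card {j. j < 1 \<and> (t + j + (u + 1)) mod m \<in> {..<k}}"
    by (rule card_less_add_split)
  also have "{j. j < 1 \<and> (t + j + (u + 1)) mod m \<in> {..<k}} = (if u < k then {0} else {})"
  proof -
    have "t + 0 + (u + 1) = u + m"
      using assms(1) by simp
    then have "(t + 0 + (u + 1)) mod m = u"
      using assms(2) by (simp only: mod_add_self2 mod_less)
    then show ?thesis
      by auto
  qed
  finally show ?thesis
    by (cases "u < k") simp_all
qed

lemma window_graph_regular:
  assumes "even k" "k \<le> m" "m = t + 1"
  defines "G \<equiv> graph_of (m + t) (window_graph m k)"
  shows "simple_graph {0..<m + t} G" and "\<forall>v<m + t. degree G v = k"
proof -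
  have sym: "window_graph m k v u" if "window_graph m k u v" for u v
    using that by (auto simp: window_graph_def matching_def)
  have irrefl: "\<not> window_graph m k u u" for u
    by (auto simp: window_graph_def window_cross_def matching_def)
  then show "simple_graph {0..<m + t} G"
    unfolding G_def by (rule simple_graph_graph_of)
  show "\<forall>v<m + t. degree G v = k"
  proof (intro allI impI)
    fix u
    assume "u < m + t"
    have "degree G u = card {w. w < m + t \<and> window_graph m k u w}"
      unfolding G_def using degree_graph_of[of "m + t" "window_graph m k" u] sym irrefl \<open>u < m + t\<close>
      by blast
    also have "\<dots> = card {w. w < m \<and> window_graph m k u w} + card {j. j < t \<and> window_graph m k u (m + j)}"
      by (rule card_less_add_split)
    also have "\<dots> = k"
    proof (cases "u < m")
      case True
      have "{w. w < m \<and> window_graph m k u w} = {w. w < m \<and> matching k u w}"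
        using True by (auto simp: window_graph_def window_cross_def)
      then have matched: "card {w. w < m \<and> window_graph m k u w} = (if u < k then 1 else 0)"
        using card_matching_neighbours[OF \<open>even k\<close> \<open>k \<le> m\<close>] by simp
      have "{j. j < t \<and> window_graph m k u (m + j)} = {j. j < t \<and> (j + (u + 1)) mod m \<in> {..<k}}"
        using True \<open>k \<le> m\<close> by (auto simp: window_graph_def window_cross_def matching_def ac_simps)
      then show ?thesis
        using matched card_window_drop_last[OF \<open>m = t + 1\<close> True \<open>k \<le> m\<close>] by simp
    next
      case False
      have "{w. w < m \<and> window_graph m k u w} = {w. w < m \<and> (w + (u - m + 1)) mod m \<in> {..<k}}"
        using False \<open>k \<le> m\<close> by (auto simp: window_graph_def window_cross_def matching_def)
      then have "card {w. w < m \<and> window_graph m k u w} = k"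
        using card_add_mod_in[of "{..<k}" m "u - m + 1"] \<open>k \<le> m\<close> by simp
      moreover have "{j. j < t \<and> window_graph m k u (m + j)} = {}"
        using False \<open>k \<le> m\<close> by (auto simp: window_graph_def window_cross_def matching_def)
      ultimately show ?thesis
        by (simp only: card.empty add_0_right)
    qed
    finally show "degree G u = k" .
  qed
qed

lemma mu_window_graph_le:
  assumes "even k" "k \<le> m" "m = t + 1"
  shows "mu {0..<m + t} (graph_of (m + t) (window_graph m k)) \<le> k div 2"
proof -
  have "mu {0..<m + t} (graph_of (m + t) (window_graph m k)) \<le> card (graph_of (m + t) (matching k))"
  proof (rule mu_le_card_uncovered[OF window_graph_regular(1)[OF assms]])
    show "graph_of (m + t) (matching k) \<subseteq> graph_of (m + t) (window_graph m k)"
      unfolding graph_of_def window_graph_def by blast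
    show "e \<inter> {m..<m + t} \<noteq> {}"
      if "e \<in> graph_of (m + t) (window_graph m k) - graph_of (m + t) (matching k)" for e
      using that \<open>m = t + 1\<close> unfolding graph_of_def window_graph_def window_cross_def by auto
  qed (use \<open>m = t + 1\<close> in auto)
  then show ?thesis
    using card_graph_of_matching[OF \<open>even k\<close>, of "m + t"] \<open>k \<le> m\<close> by simp
qed

lemma ex_regular_graph_mu_le_half:
  assumes "even k" "odd n" "2 * k \<le> n + 1"
  shows "\<exists>E. simple_graph {0..<n} E \<and> (\<forall>v<n. degree E v = k) \<and> mu {0..<n} E \<le> k div 2"
proof -
  obtain t where n: "n = (t + 1) + t"
    using \<open>odd n\<close> by (metis add.commute add_Suc_right mult_2 oddE Suc_eq_plus1)
  then have "k \<le> t + 1"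
    using assms(3) by simp
  note window = window_graph_regular[OF \<open>even k\<close> this refl] mu_window_graph_le[OF \<open>even k\<close> this refl]
  show ?thesis
    unfolding n using window by blast
qed

lemma mu_low_const_eq_degree:
  assumes "even k" "k < n" "n + 5 \<le> 2 * k"
  shows "mu_low_const n k = k"
proof (rule mu_low_const_eqI[OF ex_regular_graph_mu_le[OF assms(1,2)]])
  fix E
  assume "simple_graph {0..<n} E" "\<forall>v<n. degree E v = k"
  then show "k \<le> mu {0..<n} E"
    using regular_mu_lower_bounds(2)[of "{0..<n}" E k] assms(2,3) by auto
qed

lemma mu_low_const_eq_pred:
  assumes "even k" "k < n" "n + 3 = 2 * k"
  shows "mu_low_const n k = k - 1"
proof -
  have "4 \<le> k"
    using assms by presburger
  show ?thesis
  proof (rule mu_low_const_eqI[OF ex_regular_graph_mu_le_pred[OF assms(1) \<open>4 \<le> k\<close> assms(3)]])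
    fix E
    assume "simple_graph {0..<n} E" "\<forall>v<n. degree E v = k"
    then show "k - 1 \<le> mu {0..<n} E"
      using regular_mu_lower_bounds(3)[of "{0..<n}" E k] assms(2,3) by auto
  qed
qed

lemma mu_low_const_eq_half:
  assumes "even k" "odd n" "k < n" "2 * k \<le> n + 1"
  shows "mu_low_const n k = k div 2"
proof (rule mu_low_const_eqI[OF ex_regular_graph_mu_le_half[OF assms(1,2,4)]])
  fix E
  assume "simple_graph {0..<n} E" "\<forall>v<n. degree E v = k"
  then have "k \<le> 2 * mu {0..<n} E"
    using regular_mu_lower_bounds(1)[of "{0..<n}" E k] assms(3) by auto
  then show "k div 2 \<le> mu {0..<n} E"
    by linarith
qed

theorem theorem26:
  fixes n k :: nat
  assumes "k < n" and "odd n" and "even k"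
  shows "(int n < 2 * int k - 3 \<longrightarrow> mu_low_const n k = k)
       \<and> (int n = 2 * int k - 3 \<longrightarrow> mu_low_const n k = k - 1)
       \<and> (int n \<ge> 2 * int k - 1 \<longrightarrow> mu_low_const n k = k div 2)"
proof (intro conjI impI)
  show "mu_low_const n k = k" if "int n < 2 * int k - 3"
    using that assms by (intro mu_low_const_eq_degree) presburger+
  show "mu_low_const n k = k - 1" if "int n = 2 * int k - 3"
    using that assms by (intro mu_low_const_eq_pred) presburger+
  show "mu_low_const n k = k div 2" if "int n \<ge> 2 * int k - 1"
    using that assms by (intro mu_low_const_eq_half) presburger+
qed

end
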